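(* Let $(\mathcal{G},\mu)$ be an edge partition, $B\subseteq\mathcal{N}$ and $\zeta\in\Theta_\mathcal{G}(B)$. Let \[\mathcal{E}_\zeta=\{E\subseteq\zeta\cap\operatorname{im}\mu : (\zeta\setminus E)\cup\mu^*(E)\in\Theta_\mathcal{G}(B)\}.\] Then $\mathcal{E}_\zeta$ is closed under union: if $E_1,E_2\in\mathcal{E}_\zeta$ then $E_1\cup E_2\in\mathcal{E}_\zeta$.
   Context: $R$ is a partially ordered ring; $\mathcal{G}=(\mathcal{N},\mathcal{E})$ is a multidigraph with source/target maps $s,t\colon\mathcal{E}\to\mathcal{N}$, no self-loops, $\mathcal{N}=\{1,\dots,m+1\}$, labeling $\pi\colon\mathcal{E}\to R$. Trees/forests are subgraphs whose underlying undirected graph is acyclic (connected for trees); a tree is rooted at $N$ if $N$ is its only node without outgoing edges; spanning forests have node set $\mathcal{N}$ and are identified with their edge sets. $\Theta_\mathcal{G}(B)$ is the set of spanning forests with $|B|$ connected components, each a tree rooted at a node of $B$. A cycle is a closed directed path with no repeated nodes. $\mathcal{E}^-=\{e:\pi(e)\in R_{<0}\}$, $\mathcal{E}^+=\{e:\pi(e)\in R_{>0}\}$. A pair $(\mathcal{G},\mu)$ with $\mu\colon\mathcal{E}^-\to\mathcal{P}(\mathcal{E}^+)$ is an edge partition if (i) $\mathcal{E}=\mathcal{E}^+\sqcup\mathcal{E}^-$; (ii) every cycle contains at most one edge of $\mathcal{E}^-$; (iii) for each $e\in\mathcal{E}^-$: (a) $e'\in\mu(e)\Rightarrow s(e')=s(e)$;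 (b) $e'\in\mu(e)\Rightarrow$ every cycle containing $e'$ contains $t(e)$; (c) $\mu(e)\cap\mu(e')=\emptyset$ for $e\neq e'$. $\operatorname{im}\mu=\bigcup_{e\in\mathcal{E}^-}\mu(e)$ and $\mu^*\colon\operatorname{im}\mu\to\mathcal{E}^-$ is given by $\mu^*(e')=e$ if $e'\in\mu(e)$. *)

theory Defs
  imports Main
begin

definition multidigraph :: "nat \<Rightarrow> 'e set \<Rightarrow> ('e \<Rightarrow> nat) \<Rightarrow> ('e \<Rightarrow> nat) \<Rightarrow> bool" where
  "multidigraph m E s t \<longleftrightarrow> finite E \<and>
     (\<forall>e\<in>E. s e \<in> {1..m+1} \<and> t e \<in> {1..m+1} \<and> s e \<noteq> t e)"

definition is_cycle :: "'e set \<Rightarrow> ('e \<Rightarrow> nat) \<Rightarrow> ('e \<Rightarrow> nat) \<Rightarrow> 'e list \<Rightarrow> nat list \<Rightarrow> bool" where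
  "is_cycle E s t es vs \<longleftrightarrow> es \<noteq> [] \<and> length vs = Suc (length es) \<and> set es \<subseteq> E \<and>
     (\<forall>i<length es. s (es!i) = vs!i \<and> t (es!i) = vs!Suc i) \<and>
     vs!0 = vs!length es \<and> distinct (tl vs)"

definition undirected_cycle :: "'e set \<Rightarrow> ('e \<Rightarrow> nat) \<Rightarrow> ('e \<Rightarrow> nat) \<Rightarrow> 'e list \<Rightarrow> nat list \<Rightarrow> bool" where
  "undirected_cycle F s t es vs \<longleftrightarrow> es \<noteq> [] \<and> length vs = Suc (length es) \<and> set es \<subseteq> F \<and>
     distinct es \<and>
     (\<forall>i<length es. (s (es!i) = vs!i \<and> t (es!i) = vs!Suc i) \<or> (t (es!i) = vs!i \<and> s (es!i) = vs!Suc i)) \<and>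
     vs!0 = vs!length es \<and> distinct (tl vs)"

definition undirected_acyclic :: "'e set \<Rightarrow> ('e \<Rightarrow> nat) \<Rightarrow> ('e \<Rightarrow> nat) \<Rightarrow> bool" where
  "undirected_acyclic F s t \<longleftrightarrow> (\<nexists>es vs. undirected_cycle F s t es vs)"

definition adj :: "'e set \<Rightarrow> ('e \<Rightarrow> nat) \<Rightarrow> ('e \<Rightarrow> nat) \<Rightarrow> (nat \<times> nat) set" where
  "adj F s t = {(s e, t e) | e. e \<in> F} \<union> {(t e, s e) | e. e \<in> F}"

definition components :: "nat set \<Rightarrow> 'e set \<Rightarrow> ('e \<Rightarrow> nat) \<Rightarrow> ('e \<Rightarrow> nat) \<Rightarrow> nat set set" where
  "components N F s t = {(adj F s t)\<^sup>* `` {x} | x. x \<in> N}"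

definition spanning_forest :: "'e set \<Rightarrow> ('e \<Rightarrow> nat) \<Rightarrow> ('e \<Rightarrow> nat) \<Rightarrow> 'e set \<Rightarrow> bool" where
  "spanning_forest E s t F \<longleftrightarrow> F \<subseteq> E \<and> undirected_acyclic F s t"

definition rooted_at :: "'e set \<Rightarrow> ('e \<Rightarrow> nat) \<Rightarrow> nat set \<Rightarrow> nat \<Rightarrow> bool" where
  "rooted_at F s C b \<longleftrightarrow> {v \<in> C. \<not> (\<exists>e\<in>F. s e = v)} = {b}"

definition Theta :: "nat \<Rightarrow> 'e set \<Rightarrow> ('e \<Rightarrow> nat) \<Rightarrow> ('e \<Rightarrow> nat) \<Rightarrow> nat set \<Rightarrow> 'e set set" where
  "Theta m E s t B = {F. spanning_forest E s t F \<and>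
      card (components {1..m+1} F s t) = card B \<and>
      (\<forall>C\<in>components {1..m+1} F s t. \<exists>b\<in>B. rooted_at F s C b)}"

definition Eminus :: "'e set \<Rightarrow> ('e \<Rightarrow> 'r::ordered_ring) \<Rightarrow> 'e set" where
  "Eminus E \<pi> = {e \<in> E. \<pi> e < 0}"

definition Eplus :: "'e set \<Rightarrow> ('e \<Rightarrow> 'r::ordered_ring) \<Rightarrow> 'e set" where
  "Eplus E \<pi> = {e \<in> E. \<pi> e > 0}"

definition edge_partition ::
  "nat \<Rightarrow> 'e set \<Rightarrow> ('e \<Rightarrow> nat) \<Rightarrow> ('e \<Rightarrow> nat) \<Rightarrow> ('e \<Rightarrow> 'r::ordered_ring) \<Rightarrow> ('e \<Rightarrow> 'e set) \<Rightarrow> bool" where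
  "edge_partition m E s t \<pi> \<mu> \<longleftrightarrow> multidigraph m E s t \<and>
     E = Eplus E \<pi> \<union> Eminus E \<pi> \<and>
     (\<forall>es vs. is_cycle E s t es vs \<longrightarrow> card (set es \<inter> Eminus E \<pi>) \<le> 1) \<and>
     (\<forall>e\<in>Eminus E \<pi>. \<mu> e \<subseteq> Eplus E \<pi> \<and>
        (\<forall>e'\<in>\<mu> e. s e' = s e) \<and>
        (\<forall>e'\<in>\<mu> e. \<forall>es vs. is_cycle E s t es vs \<and> e' \<in> set es \<longrightarrow> t e \<in> set vs) \<and>
        (\<forall>e''\<in>Eminus E \<pi>. e'' \<noteq> e \<longrightarrow> \<mu> e \<inter> \<mu> e'' = {}))"

definition im_mu :: "'e set \<Rightarrow> ('e \<Rightarrow> 'r::ordered_ring) \<Rightarrow> ('e \<Rightarrow> 'e set) \<Rightarrow> 'e set" where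
  "im_mu E \<pi> \<mu> = (\<Union>e\<in>Eminus E \<pi>. \<mu> e)"

definition mu_star :: "'e set \<Rightarrow> ('e \<Rightarrow> 'r::ordered_ring) \<Rightarrow> ('e \<Rightarrow> 'e set) \<Rightarrow> 'e \<Rightarrow> 'e" where
  "mu_star E \<pi> \<mu> e' = (THE e. e \<in> Eminus E \<pi> \<and> e' \<in> \<mu> e)"

definition E_zeta ::
  "nat \<Rightarrow> 'e set \<Rightarrow> ('e \<Rightarrow> nat) \<Rightarrow> ('e \<Rightarrow> nat) \<Rightarrow> ('e \<Rightarrow> 'r::ordered_ring) \<Rightarrow> ('e \<Rightarrow> 'e set) \<Rightarrow> nat set \<Rightarrow> 'e set \<Rightarrow> 'e set set" where
  "E_zeta m E s t \<pi> \<mu> B \<zeta> = {D. D \<subseteq> \<zeta> \<inter> im_mu E \<pi> \<mu> \<and>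
      (\<zeta> - D) \<union> mu_star E \<pi> \<mu> ` D \<in> Theta m E s t B}"

end

theory Submission
  imports Defs
begin

text \<open>Given a multidigraph and roots B, the forests in Theta(B) are exactly the edge sets in
  which no edge leaves B, every other node is the source of exactly one edge, and there is no
  directed cycle: following the unique outgoing edges leads from every node to a root, which makes
  the components trees rooted in B. Exchanging edges of \<zeta> for their \<mu>*-partners preserves all
  sources, so the out-edge conditions hold for (\<zeta> - (E1 \<union> E2)) \<union> \<mu>*(E1 \<union> E2) because they hold
  for \<zeta>. A directed cycle of this graph contains at most one edge of negative label, so it cannot
  use both a partner exchanged only in E1 and one exchanged only in E2; hence it is a cycle of the
  graph exchanged along E1 or of the one exchanged along E2, both of which are acyclic.\<close>

section \<open>Walks\<close>

fun walk :: "(nat \<Rightarrow> 'e \<Rightarrow> nat \<Rightarrow> bool) \<Rightarrow> nat list \<Rightarrow> 'e list \<Rightarrow> bool" where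
  "walk P [v] [] = True"
| "walk P (u # v # vs) (e # es) = (P u e v \<and> walk P (v # vs) es)"
| "walk P _ _ = False"

definition step_rel :: "(nat \<Rightarrow> 'e \<Rightarrow> nat \<Rightarrow> bool) \<Rightarrow> (nat \<times> nat) set" where
  "step_rel P = {(u, v). \<exists>e. P u e v}"

definition arc :: "'e set \<Rightarrow> ('e \<Rightarrow> nat) \<Rightarrow> ('e \<Rightarrow> nat) \<Rightarrow> nat \<Rightarrow> 'e \<Rightarrow> nat \<Rightarrow> bool" where
  "arc F s t u e v \<longleftrightarrow> e \<in> F \<and> s e = u \<and> t e = v"

definition link :: "'e set \<Rightarrow> ('e \<Rightarrow> nat) \<Rightarrow> ('e \<Rightarrow> nat) \<Rightarrow> nat \<Rightarrow> 'e \<Rightarrow> nat \<Rightarrow> bool" where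
  "link F s t u e v \<longleftrightarrow> arc F s t u e v \<or> arc F s t v e u"

definition arcs :: "'e set \<Rightarrow> ('e \<Rightarrow> nat) \<Rightarrow> ('e \<Rightarrow> nat) \<Rightarrow> (nat \<times> nat) set" where
  "arcs F s t = (\<lambda>e. (s e, t e)) ` F"

lemma step_rel_arc: "step_rel (arc F s t) = arcs F s t"
  by (auto simp: step_rel_def arc_def arcs_def)

lemma step_rel_link: "step_rel (link F s t) = adj F s t"
  by (auto simp: step_rel_def link_def arc_def adj_def)

lemma arc_in_arcs: "e \<in> F \<Longrightarrow> (s e, t e) \<in> arcs F s t"
  by (simp add: arcs_def)

lemma arcs_subset_adj: "arcs F s t \<subseteq> adj F s t"
  by (auto simp: arcs_def adj_def)

lemma arcs_mono: "F \<subseteq> G \<Longrightarrow> arcs F s t \<subseteq> arcs G s t"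
  by (auto simp: arcs_def)

lemma adj_mono: "F \<subseteq> G \<Longrightarrow> adj F s t \<subseteq> adj G s t"
  by (auto simp: adj_def)

lemma sym_adj: "sym (adj F s t)"
  by (auto simp: adj_def sym_def)

lemma adj_rtrancl_Image_eq:
  assumes "(x, y) \<in> (adj F s t)\<^sup>*"
  shows "(adj F s t)\<^sup>* `` {x} = (adj F s t)\<^sup>* `` {y}"
proof -
  have "(y, x) \<in> (adj F s t)\<^sup>*"
    using assms sym_rtrancl[OF sym_adj] by (meson symD)
  then show ?thesis using assms by (auto intro: rtrancl_trans)
qed

lemma walk_not_Nil: "walk P vs es \<Longrightarrow> vs \<noteq> []"
  by (induction P vs es rule: walk.induct) auto

lemma walk_drop: "walk P (as @ cs) es \<Longrightarrow> cs \<noteq> [] \<Longrightarrow> walk P cs (drop (length as) es)"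
proof (induction as arbitrary: es)
  case (Cons a as)
  then obtain e es' where "es = e # es'" "walk P (as @ cs) es'"
    by (cases "as @ cs"; cases es) auto
  with Cons show ?case by simp
qed simp

lemma walk_nth:
  "walk P vs es \<Longrightarrow> length vs = Suc (length es) \<and> (\<forall>i<length es. P (vs!i) (es!i) (vs!Suc i))"
proof (induction P vs es rule: walk.induct)
  case (2 P u v vs e es)
  then show ?case by (auto simp: nth_Cons split: nat.splits)
qed auto

lemma rtrancl_step_rel_imp_walk:
  assumes "(x, y) \<in> (step_rel P)\<^sup>*"
  shows "\<exists>vs es. walk P vs es \<and> hd vs = x \<and> last vs = y \<and> distinct vs"
  using assms
proof (induction rule: converse_rtrancl_induct)
  case base
  show ?case by (rule exI[of _ "[y]"], rule exI[of _ "[]"]) simp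
next
  case (step x z)
  then obtain vs es where p: "walk P vs es" "hd vs = z" "last vs = y" "distinct vs" by blast
  from step(1) obtain e where e: "P x e z" by (auto simp: step_rel_def)
  show ?case
  proof (cases "x \<in> set vs")
    case True
    then obtain as bs where vs: "vs = as @ x # bs" by (meson split_list)
    then have "walk P (x # bs) (drop (length as) es)" using walk_drop p(1) by fastforce
    then show ?thesis using p(3,4) vs by (metis distinct_append last_appendR list.distinct(1) list.sel(1))
  next
    case False
    from walk_not_Nil[OF p(1)] p(2) obtain vs' where "vs = z # vs'" by (cases vs) auto
    then have "walk P (x # vs) (e # es)" "last (x # vs) = y" "distinct (x # vs)"
      using e p False by auto
    then show ?thesis by (metis list.sel(1))
  qed
qed

lemma walk_link_ends: "walk (link F s t) vs es \<Longrightarrow> e \<in> set es \<Longrightarrow> s e \<in> set vs \<and> t e \<in> set vs"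
  by (induction "link F s t" vs es rule: walk.induct) (auto simp: link_def arc_def)

lemma walk_link_edges: "walk (link F s t) vs es \<Longrightarrow> set es \<subseteq> F"
  by (induction "link F s t" vs es rule: walk.induct) (auto simp: link_def arc_def)

lemma walk_link_distinct_edges: "walk (link F s t) vs es \<Longrightarrow> distinct vs \<Longrightarrow> distinct es"
proof (induction "link F s t" vs es rule: walk.induct)
  case (2 u v vs e es)
  have "e \<notin> set es"
  proof
    assume "e \<in> set es"
    then have "s e \<in> set (v # vs) \<and> t e \<in> set (v # vs)" using walk_link_ends 2(2) by fastforce
    moreover have "s e = u \<or> t e = u" using 2(2) by (auto simp: link_def arc_def)
    ultimately show False using 2(3) by auto
  qed
  with 2 show ?case by simp
qed auto

lemma undirected_cycle_close:
  assumes p: "walk (link G s t) vs es" and d: "distinct vs" and "G \<subseteq> F"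
    and e: "e \<in> F" "e \<notin> G" and closing: "link F s t (last vs) e (hd vs)"
  shows "undirected_cycle F s t (es @ [e]) (vs @ [hd vs])"
proof -
  from walk_nth[OF p] have len: "length vs = Suc (length es)"
    and steps: "\<forall>i<length es. link G s t (vs!i) (es!i) (vs!Suc i)" by auto
  have last_vs: "vs ! length es = last vs" using len walk_not_Nil[OF p] by (simp add: last_conv_nth)
  have "set es \<subseteq> G" by (rule walk_link_edges[OF p])
  then have "distinct (es @ [e])" using walk_link_distinct_edges[OF p d] e by auto
  moreover have "link F s t ((vs @ [hd vs])!i) ((es @ [e])!i) ((vs @ [hd vs])!Suc i)"
    if "i < length (es @ [e])" for i
  proof (cases "i < length es")
    case True
    then show ?thesis using steps len \<open>G \<subseteq> F\<close> by (auto simp: nth_append link_def arc_def)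
  next
    case False
    then have "i = length es" using that by simp
    then show ?thesis using len closing last_vs by (simp add: nth_append)
  qed
  moreover obtain x ys where "vs = x # ys" using walk_not_Nil[OF p] by (cases vs) auto
  ultimately show ?thesis
    unfolding undirected_cycle_def
  proof (intro conjI)
    show "(vs @ [hd vs]) ! 0 = (vs @ [hd vs]) ! length (es @ [e])"
      using len \<open>vs = x # ys\<close> by (simp add: nth_append)
  qed (use len \<open>set es \<subseteq> G\<close> \<open>G \<subseteq> F\<close> e d \<open>vs = x # ys\<close> in \<open>auto simp: link_def arc_def\<close>)
qed

lemma not_undirected_acyclic_if_bypass:
  assumes "e \<in> F" "(t e, s e) \<in> (adj (F - {e}) s t)\<^sup>*"
  shows "\<not> undirected_acyclic F s t"
proof -
  obtain vs es where p: "walk (link (F - {e}) s t) vs es" "hd vs = t e" "last vs = s e" "distinct vs"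
    using rtrancl_step_rel_imp_walk assms(2) step_rel_link by metis
  have "undirected_cycle F s t (es @ [e]) (vs @ [hd vs])"
    by (rule undirected_cycle_close[OF p(1) p(4)]) (use assms(1) p(2,3) in \<open>auto simp: link_def arc_def\<close>)
  then show ?thesis by (auto simp: undirected_acyclic_def)
qed

lemma is_cycle_imp_undirected_cycle:
  assumes c: "is_cycle F s t es vs"
  shows "undirected_cycle F s t es vs"
proof -
  from c have ne: "es \<noteq> []" and len: "length vs = Suc (length es)"
    and steps: "\<forall>i<length es. s (es!i) = vs!i \<and> t (es!i) = vs!Suc i"
    and closed: "vs!0 = vs!length es" and d: "distinct (tl vs)"
    by (auto simp: is_cycle_def)
  let ?k = "length es"
  define pos where "pos i = (if i = 0 then ?k - 1 else i - 1)" for i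
  have vs_pos: "vs ! i = tl vs ! pos i" if "i < ?k" for i
    using that ne len closed by (cases vs) (auto simp: pos_def nth_Cons split: nat.splits)
  have "distinct es"
  proof (subst distinct_conv_nth, intro allI impI notI)
    fix i j assume ij: "i < ?k" "j < ?k" "i \<noteq> j" and "es ! i = es ! j"
    then have "tl vs ! pos i = tl vs ! pos j" using steps vs_pos by metis
    moreover have "pos i < length (tl vs)" "pos j < length (tl vs)" using ij len ne
      by (auto simp: pos_def)
    ultimately have "pos i = pos j" using d by (simp add: nth_eq_iff_index_eq)
    then show False using ij by (auto simp: pos_def split: if_splits)
  qed
  then show ?thesis using c by (auto simp: undirected_cycle_def is_cycle_def)
qed

lemma undirected_acyclic_imp_no_is_cycle:
  "undirected_acyclic F s t \<Longrightarrow> \<not> is_cycle F s t es vs"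
  unfolding undirected_acyclic_def by (metis is_cycle_imp_undirected_cycle)

lemma is_cycle_mono: "is_cycle F s t es vs \<Longrightarrow> set es \<subseteq> G \<Longrightarrow> is_cycle G s t es vs"
  by (auto simp: is_cycle_def)

lemma trancl_arcs_imp_is_cycle:
  assumes "(v, v) \<in> (arcs F s t)\<^sup>+"
  shows "\<exists>es vs. is_cycle F s t es vs"
proof -
  from tranclD[OF assms] obtain w where "(v, w) \<in> arcs F s t" "(w, v) \<in> (arcs F s t)\<^sup>*"
    by blast
  then obtain e where e: "e \<in> F" "s e = v" "t e = w" and "(w, v) \<in> (step_rel (arc F s t))\<^sup>*"
    by (auto simp: arcs_def step_rel_arc)
  then obtain vs es where p: "walk (arc F s t) vs es" "hd vs = w" "last vs = v" "distinct vs"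
    using rtrancl_step_rel_imp_walk by blast
  from walk_nth[OF p(1)] have len: "length vs = Suc (length es)"
    and steps: "\<forall>i<length es. arc F s t (vs!i) (es!i) (vs!Suc i)" by auto
  obtain x ys where vs: "vs = x # ys" using walk_not_Nil[OF p(1)] by (cases vs) auto
  have "is_cycle F s t (e # es) (v # vs)"
    unfolding is_cycle_def
  proof (intro conjI)
    show "set (e # es) \<subseteq> F" using e steps by (auto simp: in_set_conv_nth arc_def)
    show "\<forall>i<length (e # es). s ((e # es) ! i) = (v # vs) ! i \<and> t ((e # es) ! i) = (v # vs) ! Suc i"
      using e steps p(2) vs by (auto simp: arc_def nth_Cons split: nat.splits)
    show "(v # vs) ! 0 = (v # vs) ! length (e # es)"
      using p(3) len vs last_conv_nth[of vs] by simp
  qed (use len p(4) in auto)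
  then show ?thesis by blast
qed

lemma no_is_cycle_imp_acyclic:
  "(\<And>es vs. \<not> is_cycle F s t es vs) \<Longrightarrow> acyclic (arcs F s t)"
  unfolding acyclic_def using trancl_arcs_imp_is_cycle by blast

section \<open>Height in an acyclic graph\<close>

definition height :: "'e set \<Rightarrow> ('e \<Rightarrow> nat) \<Rightarrow> ('e \<Rightarrow> nat) \<Rightarrow> nat \<Rightarrow> nat" where
  "height F s t v = card ((arcs F s t)\<^sup>+ `` {v})"

lemma height_target_less:
  assumes "finite F" "acyclic (arcs F s t)" "e \<in> F"
  shows "height F s t (t e) < height F s t (s e)"
proof -
  let ?R = "arcs F s t"
  have arc: "(s e, t e) \<in> ?R" using assms(3) by (auto simp: arcs_def)
  have "finite (?R\<^sup>+)" using assms(1) by (simp add: arcs_def)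
  moreover have "?R\<^sup>+ `` {t e} \<subset> ?R\<^sup>+ `` {s e}"
    using arc assms(2) by (auto simp: acyclic_def intro: trancl_into_trancl2)
  ultimately show ?thesis unfolding height_def by (meson finite_Image psubset_card_mono)
qed

lemma link_source_if_height_ge:
  assumes "finite F" "acyclic (arcs F s t)" "link F s t u e w"
    and "height F s t w \<le> height F s t u"
  shows "s e = u"
  using assms height_target_less[OF assms(1,2), of e] by (auto simp: link_def arc_def)

lemma reaches_sink_set:
  assumes fin: "finite F" and acyc: "acyclic (arcs F s t)"
    and targets: "\<forall>e\<in>F. t e \<in> N" and out: "\<forall>v\<in>N - B. \<exists>e\<in>F. s e = v"
  shows "v \<in> N \<Longrightarrow> \<exists>b\<in>B. (v, b) \<in> (arcs F s t)\<^sup>*"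
proof (induction "height F s t v" arbitrary: v rule: less_induct)
  case less
  show ?case
  proof (cases "v \<in> B")
    case False
    with less.prems out obtain e where e: "e \<in> F" "s e = v" by blast
    then have "height F s t (t e) < height F s t v" using height_target_less[OF fin acyc] by blast
    then obtain b where "b \<in> B" "(t e, b) \<in> (arcs F s t)\<^sup>*" using less.hyps targets e by blast
    moreover have "(v, t e) \<in> arcs F s t" using e by (auto simp: arcs_def)
    ultimately show ?thesis by (meson converse_rtrancl_into_rtrancl)
  qed blast
qed

lemma rtrancl_arcs_avoiding:
  assumes "(x, y) \<in> (arcs F s t)\<^sup>*" "(x, v) \<notin> (arcs F s t)\<^sup>*"
  shows "(x, y) \<in> (arcs {e \<in> F. s e \<noteq> v} s t)\<^sup>*"
  using assms(1)
proof (induction rule: rtrancl_induct)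
  case (step y z)
  have "y \<noteq> v" using step(1) assms(2) by auto
  then have "(y, z) \<in> arcs {e \<in> F. s e \<noteq> v} s t" using step(2) by (auto simp: arcs_def)
  with step(3) show ?case by (rule rtrancl_into_rtrancl)
qed simp

definition unique_out_edges :: "nat set \<Rightarrow> nat set \<Rightarrow> 'e set \<Rightarrow> ('e \<Rightarrow> nat) \<Rightarrow> bool" where
  "unique_out_edges N B F s \<longleftrightarrow>
     (\<forall>v\<in>B. \<forall>e\<in>F. s e \<noteq> v) \<and> (\<forall>v\<in>N - B. \<exists>e\<in>F. s e = v) \<and> inj_on s F"

definition branching :: "nat set \<Rightarrow> nat set \<Rightarrow> 'e set \<Rightarrow> ('e \<Rightarrow> nat) \<Rightarrow> ('e \<Rightarrow> nat) \<Rightarrow> bool" where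
  "branching N B F s t \<longleftrightarrow> unique_out_edges N B F s \<and> (\<forall>es vs. \<not> is_cycle F s t es vs)"

lemma link_sym: "link F s t u e w \<longleftrightarrow> link F s t w e u"
  by (auto simp: link_def)

lemma adj_rtrancl_sym: "(x, y) \<in> (adj F s t)\<^sup>* \<Longrightarrow> (y, x) \<in> (adj F s t)\<^sup>*"
  using sym_rtrancl[OF sym_adj] by (meson symD)

locale branching_forest =
  fixes N B :: "nat set" and F :: "'e set" and s t :: "'e \<Rightarrow> nat"
  assumes finite_edges: "finite F"
    and ends_in_nodes: "e \<in> F \<Longrightarrow> s e \<in> N \<and> t e \<in> N"
    and roots_in_nodes: "B \<subseteq> N"
    and branching: "branching N B F s t"
begin

lemma root_no_out_edge: "v \<in> B \<Longrightarrow> e \<in> F \<Longrightarrow> s e \<noteq> v"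
  using branching by (auto simp: branching_def unique_out_edges_def)

lemma nonroot_out_edge: "v \<in> N - B \<Longrightarrow> \<exists>e\<in>F. s e = v"
  using branching by (auto simp: branching_def unique_out_edges_def)

lemma inj_source: "inj_on s F"
  using branching by (auto simp: branching_def unique_out_edges_def)

lemma acyclic_arcs: "acyclic (arcs F s t)"
  using branching no_is_cycle_imp_acyclic by (auto simp: branching_def)

lemma undirected_cycle_length_1:
  assumes uc: "undirected_cycle F s t es vs"
  shows "length es = 1"
proof -
  let ?k = "length es" and ?h = "height F s t"
  from uc have "es \<noteq> []" and distinct: "distinct es" and closed: "vs!0 = vs!?k"
    by (auto simp: undirected_cycle_def)
  have link: "link F s t (vs!i) (es!i) (vs!Suc i)" if "i < ?k" for i
    using uc that nth_mem[OF that] unfolding undirected_cycle_def link_def arc_def by blast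
  have k: "0 < ?k" using \<open>es \<noteq> []\<close> by simp
  define M where "M = Max ((\<lambda>i. ?h (vs!i)) ` {..<?k})"
  have "M \<in> (\<lambda>i. ?h (vs!i)) ` {..<?k}" unfolding M_def by (rule Max_in) (use k in auto)
  then obtain j where j: "j < ?k" "?h (vs!j) = M" by auto
  have le_M: "?h (vs!i) \<le> M" if "i \<le> ?k" for i
  proof -
    have "?h (vs!(if i = ?k then 0 else i)) \<le> M" unfolding M_def by (rule Max_ge) (use that k in auto)
    then show ?thesis using closed by (simp split: if_splits)
  qed
  \<comment> \<open>a vertex of maximal height is the source of both cycle edges at it\<close>
  have source: "s e = vs!j" if "link F s t (vs!j) e (vs!i)" "i \<le> ?k" for e i
    using link_source_if_height_ge[OF finite_edges acyclic_arcs that(1)] le_M[OF that(2)] j(2) by simp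
  define j' where "j' = (if j = 0 then ?k - 1 else j - 1)"
  have j': "j' < ?k" "vs ! Suc j' = vs ! j" using j(1) k closed by (auto simp: j'_def)
  have "link F s t (vs!j) (es!j') (vs!j')" using link[OF j'(1)] j'(2) link_sym by metis
  then have "s (es!j') = s (es!j)" using source j(1) j'(1) link[OF j(1)] by simp
  moreover have "es!j \<in> F" "es!j' \<in> F" using link j(1) j'(1) by (auto simp: link_def arc_def)
  ultimately have "es!j = es!j'" using inj_source by (auto dest: inj_onD)
  then have "j = j'" using distinct j(1) j'(1) nth_eq_iff_index_eq by blast
  have "j = 0"
  proof (rule ccontr)
    assume "j \<noteq> 0"
    then have "j' = j - 1" by (simp add: j'_def)
    then show False using \<open>j = j'\<close> \<open>j \<noteq> 0\<close> by linarith
  qed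
  moreover have "j' = ?k - 1" if "j = 0" using that by (simp add: j'_def)
  ultimately show "?k = 1" using \<open>j = j'\<close> k by linarith
qed

lemma undirected_acyclic: "undirected_acyclic F s t"
  unfolding undirected_acyclic_def
proof (intro notI, elim exE)
  fix es vs assume uc: "undirected_cycle F s t es vs"
  then have "length es = 1" by (rule undirected_cycle_length_1)
  then have "link F s t (vs!0) (es!0) (vs!0)"
    using uc nth_mem[of 0 es] unfolding undirected_cycle_def link_def arc_def by auto
  then have "(s (es!0), s (es!0)) \<in> arcs F s t" unfolding link_def arc_def by (metis arc_in_arcs)
  then show False using acyclic_arcs by (auto simp: acyclic_def)
qed

definition root :: "nat \<Rightarrow> nat" where
  "root v = (THE b. b \<in> B \<and> (v, b) \<in> (arcs F s t)\<^sup>*)"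

lemma single_valued_arcs: "single_valued (arcs F s t)"
  using inj_source by (auto simp: single_valued_def arcs_def dest: inj_onD)

lemma rtrancl_arcs_from_root: "(b, v) \<in> (arcs F s t)\<^sup>* \<Longrightarrow> b \<in> B \<Longrightarrow> v = b"
  by (erule converse_rtranclE) (auto simp: arcs_def dest: root_no_out_edge)

lemma root_eqI:
  assumes "b \<in> B" "(v, b) \<in> (arcs F s t)\<^sup>*"
  shows "root v = b"
  unfolding root_def
proof (rule the_equality)
  fix b' assume b': "b' \<in> B \<and> (v, b') \<in> (arcs F s t)\<^sup>*"
  then have "(b, b') \<in> (arcs F s t)\<^sup>* \<or> (b', b) \<in> (arcs F s t)\<^sup>*"
    using single_valued_confluent[OF single_valued_arcs] assms(2) by blast
  then show "b' = b" using assms(1) b' rtrancl_arcs_from_root by metis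
qed (use assms in blast)

lemma root: "v \<in> N \<Longrightarrow> root v \<in> B \<and> (v, root v) \<in> (arcs F s t)\<^sup>*"
  using reaches_sink_set[OF finite_edges acyclic_arcs, of N B] ends_in_nodes nonroot_out_edge
    root_eqI by metis

lemma root_adj: "(u, w) \<in> adj F s t \<Longrightarrow> w \<in> N \<and> root u = root w"
proof -
  assume "(u, w) \<in> adj F s t"
  then obtain e where e: "e \<in> F" "s e = u \<and> t e = w \<or> s e = w \<and> t e = u" by (auto simp: adj_def)
  then have "(s e, t e) \<in> arcs F s t" "s e \<in> N" "t e \<in> N" using ends_in_nodes by (auto simp: arcs_def)
  then have "root (s e) = root (t e)" using root root_eqI converse_rtrancl_into_rtrancl by metis
  then show ?thesis using e \<open>s e \<in> N\<close> \<open>t e \<in> N\<close> by auto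
qed

lemma root_adj_rtrancl: "(u, w) \<in> (adj F s t)\<^sup>* \<Longrightarrow> u \<in> N \<Longrightarrow> w \<in> N \<and> root w = root u"
  by (induction rule: rtrancl_induct) (auto dest: root_adj)

lemma component_eq_root_component:
  "x \<in> N \<Longrightarrow> (adj F s t)\<^sup>* `` {x} = (adj F s t)\<^sup>* `` {root x}"
  using root adj_rtrancl_Image_eq arcs_subset_adj rtrancl_mono by (metis subsetD)

lemma components_eq: "components N F s t = (\<lambda>b. (adj F s t)\<^sup>* `` {b}) ` B"
  using component_eq_root_component root roots_in_nodes by (fastforce simp: components_def)

lemma card_components: "card (components N F s t) = card B"
proof -
  have "inj_on (\<lambda>b. (adj F s t)\<^sup>* `` {b}) B"
  proof (rule inj_onI)
    fix b1 b2 assume "b1 \<in> B" "b2 \<in> B" "(adj F s t)\<^sup>* `` {b1} = (adj F s t)\<^sup>* `` {b2}"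
    then have "(b1, b2) \<in> (adj F s t)\<^sup>*" "b1 \<in> N" using roots_in_nodes by auto
    then show "b1 = b2"
      using root_adj_rtrancl root_eqI[of _ b1] root_eqI[of _ b2] \<open>b1 \<in> B\<close> \<open>b2 \<in> B\<close> by force
  qed
  then show ?thesis by (simp add: components_eq card_image)
qed

lemma rooted_components: "C \<in> components N F s t \<Longrightarrow> \<exists>b\<in>B. rooted_at F s C b"
proof -
  assume "C \<in> components N F s t"
  then obtain x where x: "x \<in> N" "C = (adj F s t)\<^sup>* `` {x}" by (auto simp: components_def)
  have "{v \<in> C. \<not> (\<exists>e\<in>F. s e = v)} = {root x}"
  proof (intro equalityI subsetI)
    fix v assume "v \<in> {v \<in> C. \<not> (\<exists>e\<in>F. s e = v)}"
    then have "(x, v) \<in> (adj F s t)\<^sup>*" and no_out: "\<not> (\<exists>e\<in>F. s e = v)" using x(2) by auto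
    then have "v \<in> N" "root v = root x" using root_adj_rtrancl x(1) by blast+
    moreover have "v \<in> B" using \<open>v \<in> N\<close> no_out nonroot_out_edge by blast
    ultimately show "v \<in> {root x}" using root_eqI[of v v] by simp
  next
    have "(x, root x) \<in> (adj F s t)\<^sup>*"
      using root[OF x(1)] rtrancl_mono[OF arcs_subset_adj] by blast
    then show "v \<in> {root x} \<Longrightarrow> v \<in> {v \<in> C. \<not> (\<exists>e\<in>F. s e = v)}" for v
      using root[OF x(1)] x(2) root_no_out_edge by blast
  qed
  then show ?thesis using root[OF x(1)] by (auto simp: rooted_at_def)
qed

end

lemma branching_imp_Theta:
  assumes "multidigraph m E s t" "B \<subseteq> {1..m+1}" "F \<subseteq> E" "branching {1..m+1} B F s t"
  shows "F \<in> Theta m E s t B"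
proof -
  interpret branching_forest "{1..m+1}" B F s t
  proof
    show "finite F" using assms(1,3) finite_subset by (auto simp: multidigraph_def)
    show "s e \<in> {1..m+1} \<and> t e \<in> {1..m+1}" if "e \<in> F" for e
      using assms(1,3) that by (auto simp: multidigraph_def)
  qed (use assms in auto)
  show ?thesis
    using assms(3) undirected_acyclic card_components rooted_components
    by (simp add: Theta_def spanning_forest_def)
qed

section \<open>The forests of Theta are the branchings\<close>

context
  fixes m :: nat and E :: "'e set" and s t :: "'e \<Rightarrow> nat" and B :: "nat set" and F :: "'e set"
  assumes roots_in_nodes: "B \<subseteq> {1..m+1}" and Theta: "F \<in> Theta m E s t B"
begin

lemma Theta_no_is_cycle: "\<not> is_cycle F s t es vs"
proof -
  have "undirected_acyclic F s t" using Theta by (simp add: Theta_def spanning_forest_def)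
  then show ?thesis by (rule undirected_acyclic_imp_no_is_cycle)
qed

lemma Theta_components_rooted: "C \<in> components {1..m+1} F s t \<Longrightarrow> \<exists>b\<in>B. rooted_at F s C b"
  using Theta by (auto simp: Theta_def)

lemma Theta_nonroot_out_edge:
  assumes "v \<in> {1..m+1} - B"
  shows "\<exists>e\<in>F. s e = v"
proof -
  have "(adj F s t)\<^sup>* `` {v} \<in> components {1..m+1} F s t"
    using assms unfolding components_def by blast
  then obtain b where "b \<in> B" "rooted_at F s ((adj F s t)\<^sup>* `` {v}) b"
    using Theta_components_rooted by blast
  then show ?thesis using assms by (auto simp: rooted_at_def)
qed

lemma Theta_root_no_out_edge:
  assumes "v \<in> B" "e \<in> F"
  shows "s e \<noteq> v"
proof -
  let ?C = "components {1..m+1} F s t" and ?A = "adj F s t"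
  define root_of where "root_of C = (SOME b. b \<in> B \<and> rooted_at F s C b)" for C
  have root_of: "root_of C \<in> B \<and> root_of C \<in> C \<and> (\<forall>e\<in>F. s e \<noteq> root_of C)" if "C \<in> ?C" for C
  proof -
    have "root_of C \<in> B \<and> rooted_at F s C (root_of C)"
      unfolding root_of_def by (rule someI_ex) (use Theta_components_rooted that in blast)
    then show ?thesis by (auto simp: rooted_at_def)
  qed
  have component_eq: "C = ?A\<^sup>* `` {root_of C}" if C: "C \<in> ?C" for C
  proof -
    obtain x where "C = ?A\<^sup>* `` {x}" using C unfolding components_def by blast
    then show ?thesis using root_of[OF C] adj_rtrancl_Image_eq by blast
  qed
  \<comment> \<open>distinct components have distinct roots, so by counting every point of B is a root\<close>
  have "inj_on root_of ?C"
    by (rule inj_onI) (metis component_eq)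
  then have "card (root_of ` ?C) = card B"
    using Theta by (simp add: card_image Theta_def)
  moreover have "finite B" using roots_in_nodes finite_subset by blast
  ultimately have "root_of ` ?C = B" using root_of by (meson card_subset_eq image_subsetI)
  then show ?thesis using assms root_of by blast
qed

lemma Theta_roots_connected_eq:
  assumes "b1 \<in> B" "b2 \<in> B" "(b1, b2) \<in> (adj F s t)\<^sup>*"
  shows "b1 = b2"
proof -
  have "(adj F s t)\<^sup>* `` {b1} \<in> components {1..m+1} F s t"
    using assms(1) roots_in_nodes unfolding components_def by blast
  then obtain b where "rooted_at F s ((adj F s t)\<^sup>* `` {b1}) b"
    using Theta_components_rooted by blast
  moreover have "b1 \<in> {v \<in> (adj F s t)\<^sup>* `` {b1}. \<not> (\<exists>e\<in>F. s e = v)}"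
    and "b2 \<in> {v \<in> (adj F s t)\<^sup>* `` {b1}. \<not> (\<exists>e\<in>F. s e = v)}"
    using assms Theta_root_no_out_edge by blast+
  ultimately show ?thesis unfolding rooted_at_def by (metis singletonD)
qed

lemma Theta_target_reaches_root_avoiding_source:
  assumes graph: "multidigraph m E s t" and e: "e \<in> F"
  shows "\<exists>b\<in>B. (t e, b) \<in> (arcs {e' \<in> F. s e' \<noteq> s e} s t)\<^sup>*"
proof -
  let ?R = "arcs F s t"
  have "F \<subseteq> E" using Theta by (simp add: Theta_def spanning_forest_def)
  then have fin: "finite F" and ends: "\<forall>e\<in>F. s e \<in> {1..m+1} \<and> t e \<in> {1..m+1}"
    using graph finite_subset by (auto simp: multidigraph_def)
  have acyc: "acyclic ?R" using Theta_no_is_cycle no_is_cycle_imp_acyclic by blast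
  have "\<exists>b\<in>B. (t e, b) \<in> ?R\<^sup>*"
  proof (rule reaches_sink_set[OF fin acyc])
    show "\<forall>e\<in>F. t e \<in> {1..m+1}" "t e \<in> {1..m+1}" using ends e by blast+
  qed (use Theta_nonroot_out_edge in blast)
  then obtain b where b: "b \<in> B" "(t e, b) \<in> ?R\<^sup>*" by blast
  have "(t e, s e) \<notin> ?R\<^sup>*"
    using arc_in_arcs[OF e] acyc unfolding acyclic_def by (meson rtrancl_into_trancl2)
  then show ?thesis using rtrancl_arcs_avoiding[OF b(2)] b(1) by blast
qed

lemma Theta_inj_source:
  assumes graph: "multidigraph m E s t"
  shows "inj_on s F"
proof (rule inj_onI, rule ccontr)
  fix e1 e2 assume e: "e1 \<in> F" "e2 \<in> F" "s e1 = s e2" "e1 \<noteq> e2"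
  \<comment> \<open>both targets lead to the root of the component of s e1 without passing through s e1,
    so e2 and these paths connect the ends of e1 outside e1\<close>
  let ?v = "s e1" and ?A = "adj F s t" and ?A' = "adj (F - {e1}) s t"
  have "arcs {e \<in> F. s e \<noteq> ?v} s t \<subseteq> ?A'"
    using arcs_subset_adj arcs_mono[of "{e \<in> F. s e \<noteq> ?v}" "F - {e1}"] by blast
  then have avoid: "(arcs {e \<in> F. s e \<noteq> ?v} s t)\<^sup>* \<subseteq> ?A'\<^sup>*" by (rule rtrancl_mono)
  obtain b1 b2 where b1: "b1 \<in> B" "(t e1, b1) \<in> ?A'\<^sup>*" and b2: "b2 \<in> B" "(t e2, b2) \<in> ?A'\<^sup>*"
    using Theta_target_reaches_root_avoiding_source[OF graph e(1)]
      Theta_target_reaches_root_avoiding_source[OF graph e(2)] e(3) avoid by auto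
  have A'_A: "?A'\<^sup>* \<subseteq> ?A\<^sup>*" by (rule rtrancl_mono[OF adj_mono]) blast
  have "(b1, b2) \<in> ?A\<^sup>*"
  proof -
    have "(b1, t e1) \<in> ?A\<^sup>*" using b1(2) A'_A adj_rtrancl_sym by blast
    moreover have "(t e1, ?v) \<in> ?A" "(?v, t e2) \<in> ?A" using e unfolding adj_def by auto
    moreover have "(t e2, b2) \<in> ?A\<^sup>*" using b2(2) A'_A by blast
    ultimately show ?thesis by (meson converse_rtrancl_into_rtrancl rtrancl_trans)
  qed
  then have "b1 = b2" using b1(1) b2(1) Theta_roots_connected_eq by blast
  moreover have "(t e2, ?v) \<in> ?A'" using e unfolding adj_def by auto
  ultimately have "(t e1, s e1) \<in> ?A'\<^sup>*"
    using b1(2) adj_rtrancl_sym[OF b2(2)] by (meson rtrancl_trans rtrancl.rtrancl_into_rtrancl)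
  then have "\<not> undirected_acyclic F s t" by (rule not_undirected_acyclic_if_bypass[OF e(1)])
  then show False using Theta by (simp add: Theta_def spanning_forest_def)
qed

end

lemma Theta_iff_branching:
  assumes graph: "multidigraph m E s t" and roots: "B \<subseteq> {1..m+1}"
  shows "F \<in> Theta m E s t B \<longleftrightarrow> F \<subseteq> E \<and> branching {1..m+1} B F s t"
proof
  assume F: "F \<in> Theta m E s t B"
  have "unique_out_edges {1..m+1} B F s"
    unfolding unique_out_edges_def
    using Theta_root_no_out_edge[OF roots F] Theta_nonroot_out_edge[OF roots F]
      Theta_inj_source[OF roots F graph] by blast
  moreover have "F \<subseteq> E" using F by (simp add: Theta_def spanning_forest_def)
  ultimately show "F \<subseteq> E \<and> branching {1..m+1} B F s t"
    using Theta_no_is_cycle[OF roots F] by (simp add: branching_def)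
qed (use branching_imp_Theta[OF graph roots] in blast)

section \<open>Exchanging edges along \<mu>*\<close>

definition exchange :: "'e set \<Rightarrow> ('e \<Rightarrow> 'r::ordered_ring) \<Rightarrow> ('e \<Rightarrow> 'e set) \<Rightarrow> 'e set \<Rightarrow> 'e set \<Rightarrow> 'e set" where
  "exchange E \<pi> \<mu> \<zeta> D = (\<zeta> - D) \<union> mu_star E \<pi> \<mu> ` D"

lemma E_zeta_iff:
  "D \<in> E_zeta m E s t \<pi> \<mu> B \<zeta> \<longleftrightarrow>
     D \<subseteq> \<zeta> \<inter> im_mu E \<pi> \<mu> \<and> exchange E \<pi> \<mu> \<zeta> D \<in> Theta m E s t B"
  by (simp add: E_zeta_def exchange_def)

context
  fixes m :: nat and E :: "'e set" and s t :: "'e \<Rightarrow> nat"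
    and \<pi> :: "'e \<Rightarrow> 'r::ordered_ring" and \<mu> :: "'e \<Rightarrow> 'e set"
  assumes partition: "edge_partition m E s t \<pi> \<mu>"
begin

lemma partition_graph: "multidigraph m E s t"
  using partition by (simp add: edge_partition_def)

lemma partition_cycle_Eminus: "is_cycle E s t es vs \<Longrightarrow> card (set es \<inter> Eminus E \<pi>) \<le> 1"
proof -
  have "\<forall>es vs. is_cycle E s t es vs \<longrightarrow> card (set es \<inter> Eminus E \<pi>) \<le> 1"
    using partition by (simp add: edge_partition_def)
  then show "is_cycle E s t es vs \<Longrightarrow> card (set es \<inter> Eminus E \<pi>) \<le> 1" by blast
qed

lemma partition_mu_source: "e \<in> Eminus E \<pi> \<Longrightarrow> e' \<in> \<mu> e \<Longrightarrow> s e' = s e"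
  using partition by (simp add: edge_partition_def)

lemma partition_mu_disjoint:
  "e \<in> Eminus E \<pi> \<Longrightarrow> e'' \<in> Eminus E \<pi> \<Longrightarrow> e'' \<noteq> e \<Longrightarrow> \<mu> e \<inter> \<mu> e'' = {}"
  using partition by (simp add: edge_partition_def)

lemma mu_star:
  assumes "e' \<in> im_mu E \<pi> \<mu>"
  shows "mu_star E \<pi> \<mu> e' \<in> Eminus E \<pi>" and "e' \<in> \<mu> (mu_star E \<pi> \<mu> e')"
proof -
  obtain e where e: "e \<in> Eminus E \<pi>" "e' \<in> \<mu> e" using assms by (auto simp: im_mu_def)
  have "e'' = e" if "e'' \<in> Eminus E \<pi>" "e' \<in> \<mu> e''" for e''
    using partition_mu_disjoint e that by blast
  then have "mu_star E \<pi> \<mu> e' = e" unfolding mu_star_def using e by blast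
  with e show "mu_star E \<pi> \<mu> e' \<in> Eminus E \<pi>" "e' \<in> \<mu> (mu_star E \<pi> \<mu> e')" by simp_all
qed

lemma source_mu_star: "e' \<in> im_mu E \<pi> \<mu> \<Longrightarrow> s (mu_star E \<pi> \<mu> e') = s e'"
  using partition_mu_source mu_star by metis

lemma exchange_subset: "\<zeta> \<subseteq> E \<Longrightarrow> D \<subseteq> im_mu E \<pi> \<mu> \<Longrightarrow> exchange E \<pi> \<mu> \<zeta> D \<subseteq> E"
  using mu_star(1) by (auto simp: exchange_def Eminus_def)

lemma unique_out_edges_exchange:
  assumes "D \<subseteq> \<zeta> \<inter> im_mu E \<pi> \<mu>" "unique_out_edges N B \<zeta> s"
  shows "unique_out_edges N B (exchange E \<pi> \<mu> \<zeta> D) s"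
proof -
  define f where "f e = (if e \<in> D then mu_star E \<pi> \<mu> e else e)" for e
  have image: "exchange E \<pi> \<mu> \<zeta> D = f ` \<zeta>" using assms(1) by (auto simp: exchange_def f_def)
  have source: "s (f e) = s e" if "e \<in> \<zeta>" for e
    using assms(1) source_mu_star by (auto simp: f_def)
  have "\<forall>v\<in>B. \<forall>e\<in>f ` \<zeta>. s e \<noteq> v" using assms(2) source by (auto simp: unique_out_edges_def)
  moreover have "\<forall>v\<in>N - B. \<exists>e\<in>f ` \<zeta>. s e = v"
  proof
    fix v assume "v \<in> N - B"
    then obtain e where "e \<in> \<zeta>" "s e = v" using assms(2) unfolding unique_out_edges_def by blast
    then show "\<exists>e\<in>f ` \<zeta>. s e = v" using source by (intro bexI[of _ "f e"]) auto
  qed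
  moreover have "inj_on s (f ` \<zeta>)"
  proof (rule inj_onI)
    fix x y assume "x \<in> f ` \<zeta>" "y \<in> f ` \<zeta>" "s x = s y"
    then obtain a b where "a \<in> \<zeta>" "b \<in> \<zeta>" "x = f a" "y = f b" "s a = s b" using source by auto
    then show "x = y" using assms(2) by (auto simp: unique_out_edges_def dest: inj_onD)
  qed
  ultimately show ?thesis unfolding image unique_out_edges_def by blast
qed

lemma is_cycle_exchange_Un:
  assumes "\<zeta> \<subseteq> E" "D1 \<subseteq> im_mu E \<pi> \<mu>" "D2 \<subseteq> im_mu E \<pi> \<mu>"
    and cycle: "is_cycle (exchange E \<pi> \<mu> \<zeta> (D1 \<union> D2)) s t es vs"
  shows "set es \<subseteq> exchange E \<pi> \<mu> \<zeta> D1 \<or> set es \<subseteq> exchange E \<pi> \<mu> \<zeta> D2"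
proof (rule ccontr)
  let ?ms = "mu_star E \<pi> \<mu>"
  assume "\<not> ?thesis"
  then obtain x1 x2 where x: "x1 \<in> set es" "x1 \<notin> exchange E \<pi> \<mu> \<zeta> D1"
    "x2 \<in> set es" "x2 \<notin> exchange E \<pi> \<mu> \<zeta> D2" by blast
  have es: "set es \<subseteq> exchange E \<pi> \<mu> \<zeta> (D1 \<union> D2)" using cycle by (simp add: is_cycle_def)
  obtain a1 where "a1 \<in> D2" "x1 = ?ms a1" using x(1,2) es unfolding exchange_def by blast
  obtain a2 where "a2 \<in> D1" "x2 = ?ms a2" using x(3,4) es unfolding exchange_def by blast
  have "x1 \<noteq> x2" using x(2) \<open>a2 \<in> D1\<close> \<open>x2 = ?ms a2\<close> unfolding exchange_def by blast
  moreover have "x1 \<in> Eminus E \<pi>" "x2 \<in> Eminus E \<pi>"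
    using mu_star(1)[of a1] mu_star(1)[of a2] \<open>x1 = ?ms a1\<close> \<open>x2 = ?ms a2\<close>
      \<open>a1 \<in> D2\<close> \<open>a2 \<in> D1\<close> assms(2,3) by auto
  ultimately have "card {x1, x2} \<le> card (set es \<inter> Eminus E \<pi>)"
    using x(1,3) by (intro card_mono) auto
  moreover have "set es \<subseteq> E" using es exchange_subset[OF assms(1), of "D1 \<union> D2"] assms(2,3) by blast
  then have "card (set es \<inter> Eminus E \<pi>) \<le> 1"
    by (rule partition_cycle_Eminus[OF is_cycle_mono[OF cycle]])
  ultimately show False using \<open>x1 \<noteq> x2\<close> by simp
qed

end

theorem lemma3p3:
  fixes m :: nat and E :: "'e set" and s t :: "'e \<Rightarrow> nat"
    and \<pi> :: "'e \<Rightarrow> 'r::ordered_ring" and \<mu> :: "'e \<Rightarrow> 'e set"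
    and B :: "nat set" and \<zeta> E1 E2 :: "'e set"
  assumes "edge_partition m E s t \<pi> \<mu>"
    and "B \<subseteq> {1..m+1}"
    and "\<zeta> \<in> Theta m E s t B"
    and "E1 \<in> E_zeta m E s t \<pi> \<mu> B \<zeta>"
    and "E2 \<in> E_zeta m E s t \<pi> \<mu> B \<zeta>"
  shows "E1 \<union> E2 \<in> E_zeta m E s t \<pi> \<mu> B \<zeta>"
proof -
  note partition = assms(1) and graph = partition_graph[OF assms(1)]
  let ?Z = "exchange E \<pi> \<mu> \<zeta>"
  have D: "E1 \<union> E2 \<subseteq> \<zeta> \<inter> im_mu E \<pi> \<mu>" and Z: "?Z E1 \<in> Theta m E s t B" "?Z E2 \<in> Theta m E s t B"
    using assms(4,5) by (auto simp: E_zeta_iff)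
  have \<zeta>: "\<zeta> \<subseteq> E" "unique_out_edges {1..m+1} B \<zeta> s"
    using assms(3) Theta_iff_branching[OF graph assms(2)] by (auto simp: branching_def)
  have "?Z (E1 \<union> E2) \<subseteq> E" using exchange_subset[OF partition \<zeta>(1)] D by blast
  moreover have "unique_out_edges {1..m+1} B (?Z (E1 \<union> E2)) s"
    using unique_out_edges_exchange[OF partition D \<zeta>(2)] .
  moreover have "\<not> is_cycle (?Z (E1 \<union> E2)) s t es vs" for es vs
    using is_cycle_exchange_Un[OF partition \<zeta>(1)] D is_cycle_mono Theta_no_is_cycle[OF assms(2)] Z
    by (metis le_infE le_supE)
  ultimately have "?Z (E1 \<union> E2) \<in> Theta m E s t B"
    using Theta_iff_branching[OF graph assms(2)] by (simp add: branching_def)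
  then show ?thesis using D by (simp add: E_zeta_iff)
qed

end
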